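(* Let $r\ge0$, let $\mathbf u=(u_1,\dots,u_r)$ be a tuple of positive integers, and let $\mathbf w=(w_1,\dots,w_n)$ and $\boldsymbol\ell=(\ell_1,\dots,\ell_n)$ be tuples of positive integers with $2\le\ell_i\le w_i$ for all $i$. Define an equivalence relation $\sim$ on $\{1,\dots,n\}$ by $i\sim j$ if and only if $w_i=w_j$ and $\ell_i=\ell_j$, and let $R$ be a set of equivalence class representatives. Then \[ C(\mathrm{cat}(\mathbf u,\mathbf w),\mathrm{cat}(1^r,\boldsymbol\ell),2)=C(\mathrm{cat}(\mathbf u,\mathbf w^R),\mathrm{cat}(1^r,\boldsymbol\ell^R),2). \]
   Context: $1^r$ denotes the $r$-tuple with all entries $1$; $\mathrm{cat}(\mathbf a,\mathbf b)$ is the concatenation of tuples; for $R\subseteq\{1,\dots,n\}$, $\mathbf w^R$ denotes the tuple of entries of $\mathbf w$ in positions from $R$ (in increasing order). For tuples $\mathbf v,\mathbf k$ of positive integers of the same length $p$ with $\mathbf k\le\mathbf v$ entrywise: let $X_1,\dots,X_p$ be pairwise disjoint sets with $|X_i|=v_i$; a block is a $p$-tuple $(B_1,\dots,B_p)$ with $B_i\subseteq X_i$, $|B_i|=k_i$; a $p$-tuple of sets $(T_1,\dots,T_p)$ is $(\mathbf v,\mathbf k,2)$-admissible if $T_i\subseteq X_i$, $|T_i|\le k_i$ and $\sum|T_i|=2$, and is contained in a block if $T_i\subseteq B_i$ for all $i$. A ${\rm GC}(\mathbf v,\mathbf k,2)$ is a finite family (repetitions allowed) of blocks containing every admissible tuple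 in at least one block; $C(\mathbf v,\mathbf k,2)$ is the minimum number of blocks of such a design. *)

theory Defs
  imports Main
begin

text \<open>Tuples are lists (0-based positions). The point set X_i is realised
canonically as {..< v!i} in coordinate i (the coordinates are kept apart by
being separate list entries, which models pairwise disjointness).\<close>

definition is_block :: "nat list \<Rightarrow> nat list \<Rightarrow> nat set list \<Rightarrow> bool" where
  "is_block v k B \<longleftrightarrow> length B = length v \<and>
     (\<forall>i<length v. B!i \<subseteq> {..<v!i} \<and> card (B!i) = k!i)"

definition admissible2 :: "nat list \<Rightarrow> nat list \<Rightarrow> nat set list \<Rightarrow> bool" where
  "admissible2 v k T \<longleftrightarrow> length T = length v \<and>
     (\<forall>i<length v. T!i \<subseteq> {..<v!i} \<and> card (T!i) \<le> k!i) \<and>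
     (\<Sum>i<length v. card (T!i)) = 2"

definition contained_in :: "nat set list \<Rightarrow> nat set list \<Rightarrow> bool" where
  "contained_in T B \<longleftrightarrow> (\<forall>i<length T. T!i \<subseteq> B!i)"

text \<open>A GC(v,k,2): a finite family (list, repetitions allowed) of blocks
covering every admissible tuple.\<close>
definition is_GC2 :: "nat list \<Rightarrow> nat list \<Rightarrow> nat set list list \<Rightarrow> bool" where
  "is_GC2 v k F \<longleftrightarrow> (\<forall>B\<in>set F. is_block v k B) \<and>
     (\<forall>T. admissible2 v k T \<longrightarrow> (\<exists>B\<in>set F. contained_in T B))"

definition C2 :: "nat list \<Rightarrow> nat list \<Rightarrow> nat" where
  "C2 v k = (LEAST m. \<exists>F. is_GC2 v k F \<and> length F = m)"

end

theory Submission
  imports Defs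
begin

text \<open>A family of blocks is a GC(v,k,2) iff every pair of distinct points that fits into a
single block lies in one of its blocks. Let \<sigma> send the parts of (v,k) to parts of (v',k')
with the same sizes and block sizes, identifying two parts only when 2 \<le> k \<le> v. Pulling a
GC(v',k',2) back along \<sigma> (part c of the new block is part \<sigma> c of the old one) gives a
GC(v,k,2) of the same size: a pair split over two glued parts is a pair inside one part of
(v',k'), covered as k \<ge> 2; and a point occurring in both glued parts is covered together
with any second point of that part, which exists as v \<ge> 2. Between cat(u,w) and
cat(u,w^R) there are such maps in both directions: the inclusion of the representatives and
the map sending each index to its representative.\<close>

lemma admissible2_iff_card_points:
  "admissible2 V K T \<longleftrightarrow> length T = length V \<and>
     (\<forall>i<length V. T!i \<subseteq> {..<V!i} \<and> card (T!i) \<le> K!i) \<and>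
     card (SIGMA i:{..<length V}. T!i) = 2"
proof -
  have "card (SIGMA i:{..<length V}. T!i) = (\<Sum>i<length V. card (T!i))"
    if "\<forall>i<length V. T!i \<subseteq> {..<V!i}"
    using that by (intro card_SigmaI) (auto intro: finite_subset)
  then show ?thesis unfolding admissible2_def by auto
qed

definition covers_pairs :: "nat list \<Rightarrow> nat list \<Rightarrow> nat set list list \<Rightarrow> bool" where
  "covers_pairs V K F \<longleftrightarrow> (\<forall>i<length V. \<forall>j<length V. \<forall>x<V!i. \<forall>y<V!j.
     (i, x) \<noteq> (j, y) \<and> (if i = j then 2 \<le> K!i else 1 \<le> K!i \<and> 1 \<le> K!j) \<longrightarrow>
     (\<exists>B\<in>set F. x \<in> B!i \<and> y \<in> B!j))"

lemma covers_pairsD: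
  assumes "covers_pairs V K F" "i < length V" "j < length V" "x < V!i" "y < V!j"
    "(i, x) \<noteq> (j, y)" "if i = j then 2 \<le> K!i else 1 \<le> K!i \<and> 1 \<le> K!j"
  shows "\<exists>B\<in>set F. x \<in> B!i \<and> y \<in> B!j"
  using assms unfolding covers_pairs_def by blast

lemma admissible2_pair:
  assumes "i < length V" "j < length V" "x < V!i" "y < V!j" "(i, x) \<noteq> (j, y)"
    "if i = j then 2 \<le> K!i else 1 \<le> K!i \<and> 1 \<le> K!j"
  shows "admissible2 V K (map (\<lambda>t. {z. (t, z) = (i, x) \<or> (t, z) = (j, y)}) [0..<length V])"
    (is "admissible2 V K ?T")
proof -
  have T: "?T!t = (if t = i then {x} else {}) \<union> (if t = j then {y} else {})"
    if "t < length V" for t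
    using that by auto
  have "card (?T!t) \<le> K!t" if "t < length V" for t
    unfolding T[OF that] using assms(6) by (cases "t = i"; cases "t = j") (auto simp: card_insert_if)
  moreover have "(SIGMA t:{..<length V}. ?T!t) = {(i, x), (j, y)}" using assms(1,2) by auto
  ultimately show ?thesis unfolding admissible2_iff_card_points using assms by auto
qed

lemma covers_pairs_contains_admissible2:
  assumes cov: "covers_pairs V K F" and adm: "admissible2 V K T"
  shows "\<exists>B\<in>set F. contained_in T B"
proof -
  let ?P = "SIGMA t:{..<length V}. T!t"
  have len: "length T = length V"
    and T: "\<And>t. t < length V \<Longrightarrow> T!t \<subseteq> {..<V!t} \<and> card (T!t) \<le> K!t"
    and "card ?P = 2"
    using adm unfolding admissible2_iff_card_points by auto
  then obtain i x j y where ij: "(i, x) \<noteq> (j, y)" "?P = {(i, x), (j, y)}"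
    by (metis card_2_iff surj_pair)
  then have i: "i < length V" "x \<in> T!i" and j: "j < length V" "y \<in> T!j" by auto
  have fin: "finite (T!t)" if "t < length V" for t
    using T[OF that] finite_subset by blast
  have "if i = j then 2 \<le> K!i else 1 \<le> K!i \<and> 1 \<le> K!j"
  proof (cases "i = j")
    case True
    then have "card {x, y} \<le> card (T!i)" using i j fin by (intro card_mono) auto
    then show ?thesis using True ij(1) T[OF i(1)] by auto
  next
    case False
    have "1 \<le> card (T!i)" "1 \<le> card (T!j)"
      using i j fin by (auto simp: Suc_le_eq card_gt_0_iff)
    then show ?thesis using False T[OF i(1)] T[OF j(1)] by simp
  qed
  then obtain B where B: "B \<in> set F" "x \<in> B!i" "y \<in> B!j"
    using covers_pairsD[OF cov i(1) j(1) _ _ ij(1)] i j T by blast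
  have "T!t \<subseteq> B!t" if "t < length V" for t
  proof
    fix z assume "z \<in> T!t"
    then have "(t, z) \<in> ?P" using that by auto
    then show "z \<in> B!t" using ij(2) B by auto
  qed
  then show ?thesis using B(1) len unfolding contained_in_def by auto
qed

lemma is_GC2_iff_covers_pairs:
  "is_GC2 V K F \<longleftrightarrow> (\<forall>B\<in>set F. is_block V K B) \<and> covers_pairs V K F"
proof -
  have "covers_pairs V K F"
    if covered: "\<forall>T. admissible2 V K T \<longrightarrow> (\<exists>B\<in>set F. contained_in T B)"
    unfolding covers_pairs_def
  proof (intro allI impI)
    fix i j x y
    assume i: "i < length V" and j: "j < length V" and x: "x < V!i" and y: "y < V!j"
      and pair: "(i, x) \<noteq> (j, y) \<and> (if i = j then 2 \<le> K!i else 1 \<le> K!i \<and> 1 \<le> K!j)"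
    let ?T = "map (\<lambda>t. {z. (t, z) = (i, x) \<or> (t, z) = (j, y)}) [0..<length V]"
    have "admissible2 V K ?T"
      using i j x y pair by (intro admissible2_pair) auto
    then obtain B where B: "B \<in> set F" "contained_in ?T B"
      using covered by blast
    then have "?T!i \<subseteq> B!i" "?T!j \<subseteq> B!j"
      using i j unfolding contained_in_def by auto
    moreover have "x \<in> ?T!i" "y \<in> ?T!j" using i j by auto
    ultimately show "\<exists>B\<in>set F. x \<in> B!i \<and> y \<in> B!j"
      using B(1) by blast
  qed
  then show ?thesis
    unfolding is_GC2_def using covers_pairs_contains_admissible2 by blast
qed

definition part_merging ::
    "(nat \<Rightarrow> nat) \<Rightarrow> nat list \<Rightarrow> nat list \<Rightarrow> nat list \<Rightarrow> nat list \<Rightarrow> bool" where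
  "part_merging \<sigma> V K V' K' \<longleftrightarrow>
     (\<forall>c<length V. \<sigma> c < length V' \<and> V'!(\<sigma> c) = V!c \<and> K'!(\<sigma> c) = K!c) \<and>
     (\<forall>c<length V. \<forall>d<length V. c \<noteq> d \<longrightarrow> \<sigma> c = \<sigma> d \<longrightarrow> 2 \<le> K!c \<and> K!c \<le> V!c)"

lemma is_block_pullback:
  assumes "part_merging \<sigma> V K V' K'" "is_block V' K' B"
  shows "is_block V K (map (\<lambda>c. B!(\<sigma> c)) [0..<length V])"
proof -
  have "B!(\<sigma> c) \<subseteq> {..<V!c} \<and> card (B!(\<sigma> c)) = K!c" if "c < length V" for c
    using assms that unfolding part_merging_def is_block_def by metis
  then show ?thesis unfolding is_block_def by simp
qed

lemma covers_pairs_pullback: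
  assumes \<sigma>: "part_merging \<sigma> V K V' K'" and cov: "covers_pairs V' K' F"
  shows "covers_pairs V K (map (\<lambda>B. map (\<lambda>c. B!(\<sigma> c)) [0..<length V]) F)"
  unfolding covers_pairs_def
proof (intro allI impI)
  fix i j x y
  assume i: "i < length V" and j: "j < length V" and x: "x < V!i" and y: "y < V!j"
    and pair: "(i, x) \<noteq> (j, y) \<and> (if i = j then 2 \<le> K!i else 1 \<le> K!i \<and> 1 \<le> K!j)"
  have si: "\<sigma> i < length V'" "V'!(\<sigma> i) = V!i" "K'!(\<sigma> i) = K!i"
    and sj: "\<sigma> j < length V'" "V'!(\<sigma> j) = V!j" "K'!(\<sigma> j) = K!j"
    using \<sigma> i j unfolding part_merging_def by auto
  have merged: "2 \<le> K!i \<and> K!i \<le> V!i" if "i \<noteq> j" "\<sigma> i = \<sigma> j"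
    using \<sigma> i j that unfolding part_merging_def by blast
  obtain B where B: "B \<in> set F" "x \<in> B!(\<sigma> i)" "y \<in> B!(\<sigma> j)"
  proof (cases "\<sigma> i = \<sigma> j")
    case False
    then have "i \<noteq> j" by auto
    then show ?thesis
      using that covers_pairsD[OF cov si(1) sj(1), of x y] x y si sj pair False by auto
  next
    case True
    have two: "2 \<le> K'!(\<sigma> i)" using pair merged True si by (cases "i = j") auto
    show ?thesis
    proof (cases "x = y")
      case False
      then show ?thesis
        using that covers_pairsD[OF cov si(1) si(1), of x y] x y si sj True two by auto
    next
      case True
      define x' where "x' = (if x = 0 then 1 else (0::nat))"
      have "i \<noteq> j" using pair True by auto
      then have "x' < V'!(\<sigma> i)" "x \<noteq> x'"
        using merged \<open>\<sigma> i = \<sigma> j\<close> si by (auto simp: x'_def)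
      then show ?thesis
        using that covers_pairsD[OF cov si(1) si(1), of x x'] x si two True \<open>\<sigma> i = \<sigma> j\<close> by auto
    qed
  qed
  then show "\<exists>B'\<in>set (map (\<lambda>B. map (\<lambda>c. B!(\<sigma> c)) [0..<length V]) F). x \<in> B'!i \<and> y \<in> B'!j"
    using i j by auto
qed

lemma is_GC2_pullback:
  assumes "part_merging \<sigma> V K V' K'" "is_GC2 V' K' F"
  shows "is_GC2 V K (map (\<lambda>B. map (\<lambda>c. B!(\<sigma> c)) [0..<length V]) F)"
  using assms is_block_pullback covers_pairs_pullback
  unfolding is_GC2_iff_covers_pairs by auto

lemma C2_eq_if_part_merging:
  assumes "part_merging \<sigma> V K V' K'" "part_merging \<tau> V' K' V K"
  shows "C2 V K = C2 V' K'"
proof -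
  have "(\<exists>F. is_GC2 V K F \<and> length F = m) \<longleftrightarrow> (\<exists>F. is_GC2 V' K' F \<and> length F = m)" for m
    using is_GC2_pullback[OF assms(1)] is_GC2_pullback[OF assms(2)] length_map by metis
  then show ?thesis unfolding C2_def by simp
qed

lemma part_merging_append:
  assumes \<sigma>: "part_merging \<sigma> V K V' K'" and len: "length L = length U"
  shows "part_merging (\<lambda>c. if c < length U then c else length U + \<sigma> (c - length U))
           (U @ V) (L @ K) (U @ V') (L @ K')"
    (is "part_merging ?\<tau> _ _ _ _")
proof -
  let ?p = "length U"
  have "?\<tau> c < length (U @ V') \<and> (U @ V')!(?\<tau> c) = (U @ V)!c \<and> (L @ K')!(?\<tau> c) = (L @ K)!c"
    if "c < length (U @ V)" for c
    using \<sigma> that len unfolding part_merging_def by (cases "c < ?p") (auto simp: nth_append)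
  moreover have "2 \<le> (L @ K)!c \<and> (L @ K)!c \<le> (U @ V)!c"
    if "c < length (U @ V)" "d < length (U @ V)" "c \<noteq> d" "?\<tau> c = ?\<tau> d" for c d
  proof -
    have "\<not> c < ?p" "\<not> d < ?p" using that by (auto split: if_splits)
    then have "c - ?p \<noteq> d - ?p" "\<sigma> (c - ?p) = \<sigma> (d - ?p)" using that by auto
    moreover have "c - ?p < length V" "d - ?p < length V" using that \<open>\<not> c < ?p\<close> \<open>\<not> d < ?p\<close> by auto
    ultimately have "2 \<le> K!(c - ?p) \<and> K!(c - ?p) \<le> V!(c - ?p)"
      using \<sigma> unfolding part_merging_def by blast
    then show ?thesis using \<open>\<not> c < ?p\<close> len by (simp add: nth_append)
  qed
  ultimately show ?thesis unfolding part_merging_def by blast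
qed

lemma part_merging_select:
  assumes "distinct js" "set js \<subseteq> {..<length V}"
  shows "part_merging (nth js) (map (nth V) js) (map (nth K) js) V K"
  using assms unfolding part_merging_def by (auto simp: nth_eq_iff_index_eq dest: nth_mem)

lemma part_merging_onto_representatives:
  assumes "\<forall>i<length V. \<exists>j\<in>set js. V!j = V!i \<and> K!j = K!i"
    and "\<forall>i<length V. 2 \<le> K!i \<and> K!i \<le> V!i"
  shows "\<exists>\<sigma>. part_merging \<sigma> V K (map (nth V) js) (map (nth K) js)"
proof -
  have "\<forall>i. \<exists>t. i < length V \<longrightarrow> t < length js \<and> V!(js!t) = V!i \<and> K!(js!t) = K!i"
    using assms(1) by (metis in_set_conv_nth)
  then obtain \<sigma> where
    "\<forall>i<length V. \<sigma> i < length js \<and> V!(js!\<sigma> i) = V!i \<and> K!(js!\<sigma> i) = K!i"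
    by metis
  then have "part_merging \<sigma> V K (map (nth V) js) (map (nth K) js)"
    using assms(2) unfolding part_merging_def by auto
  then show ?thesis by blast
qed

theorem theorem3p13:
  fixes u w l :: "nat list" and R :: "nat set"
  assumes "\<forall>x\<in>set u. 0 < x"
    and "length l = length w"
    and "\<forall>i<length w. 2 \<le> l!i \<and> l!i \<le> w!i"
    and "R \<subseteq> {..<length w}"
    and "\<forall>i<length w. \<exists>!j. j \<in> R \<and> w!j = w!i \<and> l!j = l!i"
  shows "C2 (u @ w) (replicate (length u) 1 @ l)
       = C2 (u @ nths w R) (replicate (length u) 1 @ nths l R)"
proof -
  let ?js = "nths [0..<length w] R"
  have sel: "nths w R = map (nth w) ?js" "nths l R = map (nth l) ?js"
    using map_nth[of w] map_nth[of l] assms(2) by (simp_all add: nths_map[symmetric])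
  have js: "distinct ?js" "set ?js = R"
    using assms(4) by (auto simp: set_nths) (metis add_0 in_mono lessThan_iff nth_upt)
  have "\<forall>i<length w. \<exists>j\<in>set ?js. w!j = w!i \<and> l!j = l!i"
    using assms(5) unfolding js(2) by blast
  then obtain \<sigma> where \<sigma>: "part_merging \<sigma> w l (nths w R) (nths l R)"
    using part_merging_onto_representatives assms(3) unfolding sel by blast
  have \<tau>: "part_merging (nth ?js) (nths w R) (nths l R) w l"
    using part_merging_select[of ?js w l] js assms(4) unfolding sel by simp
  have len: "length (replicate (length u) (1::nat)) = length u" by simp
  show ?thesis
    by (rule C2_eq_if_part_merging[OF part_merging_append[OF \<sigma> len]
                                     part_merging_append[OF \<tau> len]])
qed

end
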